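(* Let $X$ be a Minkowski space of dimension at least $2$ whose closed unit ball is a polytope with $f$ facets. Then $m(X)\leq f-1$.
   Context: A Minkowski space is a finite-dimensional real normed space $(X,\|\cdot\|)$. For a set $S\subseteq X$, its midpoint set is $M(S)=\{\tfrac12(x+y): x,y\in S,\ x\neq y\}$. A set $S\subseteq X$ is an M-set if every vector in $M(S)$ has norm exactly $1$ and every vector in $S$ has norm strictly greater than $1$. $m(X)$ denotes the largest cardinality of an M-set in $X$ if such a largest finite cardinality exists, and $m(X)=\infty$ otherwise. *)

theory Defs
  imports "HOL-Analysis.Analysis"
begin

text \<open>A Minkowski space is modelled as a finite-dimensional real vector space
(a type of class euclidean_space, used only for its linear/affine structure)
equipped with an arbitrary norm N.\<close>

definition is_norm :: "('a::real_vector \<Rightarrow> real) \<Rightarrow> bool" where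
  "is_norm N \<longleftrightarrow>
     (\<forall>x. N x = 0 \<longleftrightarrow> x = 0) \<and>
     (\<forall>c x. N (c *\<^sub>R x) = \<bar>c\<bar> * N x) \<and>
     (\<forall>x y. N (x + y) \<le> N x + N y)"

definition midpoint_set :: "'a::real_vector set \<Rightarrow> 'a set" where
  "midpoint_set S = {(1/2) *\<^sub>R (x + y) | x y. x \<in> S \<and> y \<in> S \<and> x \<noteq> y}"

definition is_M_set :: "('a::real_vector \<Rightarrow> real) \<Rightarrow> 'a set \<Rightarrow> bool" where
  "is_M_set N S \<longleftrightarrow> (\<forall>z \<in> midpoint_set S. N z = 1) \<and> (\<forall>x \<in> S. N x > 1)"

end

theory Submission
  imports Defs
begin

text \<open>
  Since the unit ball B of N is a centrally symmetric polytope containing 0 in its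
  interior, it can be written as B = {x. c \<bullet> x \<le> 1 for all c \<in> A} for a finite set A of
  functionals with -A = A.  Every such c satisfies |c \<bullet> v| \<le> N v, every point of norm > 1
  is cut off by some c \<in> A, and every point of norm 1 lies on some hyperplane c \<bullet> x = 1.

  Given an M-set S, choose for every x \<in> S a functional j x \<in> A with j x \<bullet> x > 1.  Since
  midpoints have norm 1, c \<bullet> x + c \<bullet> y \<le> 2 for distinct x, y \<in> S, so j is injective and
  |S| \<le> |A|.  A short case analysis (using -A = A and the hyperplane through the midpoint
  of x and the point assigned to -j x) rules out that j is onto when |A| \<ge> 3; hence |S| < |A|.

  Choosing A of minimal cardinality makes the description irredundant, and every functional of
  an irredundant description yields its own facet, so |A| \<le> f.  Finally, in dimension \<ge> 2 a
  symmetric description needs at least three functionals, which is required by the case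
  analysis above.
\<close>

subsection \<open>Irredundant systems of halfspaces\<close>

definition halfspace_body :: "'a::euclidean_space set \<Rightarrow> 'a set" where
  "halfspace_body A = {x. \<forall>c\<in>A. c \<bullet> x \<le> 1}"

definition irredundant :: "'a::euclidean_space set \<Rightarrow> bool" where
  "irredundant A \<longleftrightarrow> (\<forall>c\<in>A. \<exists>z. (\<forall>c'\<in>A - {c}. c' \<bullet> z \<le> 1) \<and> c \<bullet> z > 1)"

lemma irredundant_boundary_point:
  assumes "irredundant A" "c \<in> A"
  obtains p t where "p \<in> halfspace_body A" "c \<bullet> p = 1" "\<And>c'. c' \<in> A - {c} \<Longrightarrow> c' \<bullet> p < 1"
    "t > 1" "\<And>c'. c' \<in> A - {c} \<Longrightarrow> c' \<bullet> (t *\<^sub>R p) \<le> 1"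
proof -
  obtain z where z: "\<forall>c'\<in>A - {c}. c' \<bullet> z \<le> 1" "c \<bullet> z > 1"
    using assms unfolding irredundant_def by blast
  define p where "p = (1 / (c \<bullet> z)) *\<^sub>R z"
  have z_eq: "z = (c \<bullet> z) *\<^sub>R p" unfolding p_def using z(2) by simp
  have on_c: "c \<bullet> p = 1" unfolding p_def using z(2) by simp
  have inside: "c' \<bullet> p < 1" if "c' \<in> A - {c}" for c'
  proof -
    have "c' \<bullet> z \<le> 1" using z(1) that by blast
    then have "c' \<bullet> z < c \<bullet> z" using z(2) by linarith
    then show ?thesis unfolding p_def using z(2) by (simp add: divide_less_eq)
  qed
  have "c' \<bullet> p \<le> 1" if "c' \<in> A" for c'
    using on_c inside[of c'] that by (cases "c' = c") auto
  then have "p \<in> halfspace_body A" unfolding halfspace_body_def by blast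
  moreover have "c' \<bullet> ((c \<bullet> z) *\<^sub>R p) \<le> 1" if "c' \<in> A - {c}" for c'
    using z(1) that by (simp add: z_eq[symmetric])
  ultimately show thesis using that on_c inside z(2) by blast
qed

lemma irredundant_facet:
  fixes A :: "'a::euclidean_space set"
  assumes "finite A" "irredundant A" "c \<in> A"
  shows "halfspace_body A \<inter> {x. c \<bullet> x = 1} facet_of halfspace_body A"
proof -
  let ?S = "halfspace_body A"
  define H where "H d = {x. d \<bullet> x \<le> (1::real)}" for d :: 'a
  have inj_H: "inj_on H A"
  proof (rule inj_onI, rule ccontr)
    fix c1 c2 assume c: "c1 \<in> A" "c2 \<in> A" "H c1 = H c2" "c1 \<noteq> c2"
    obtain p t where "p \<in> ?S" "c1 \<bullet> p = 1" "\<And>c'. c' \<in> A - {c1} \<Longrightarrow> c' \<bullet> p < 1" "t > 1"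
      and beyond: "\<And>c'. c' \<in> A - {c1} \<Longrightarrow> c' \<bullet> (t *\<^sub>R p) \<le> 1"
      using irredundant_boundary_point[OF assms(2) c(1)] by blast
    have "t *\<^sub>R p \<in> H c2" using beyond c(2,4) unfolding H_def by blast
    then have "t *\<^sub>R p \<in> H c1" using c(3) by simp
    then have "c1 \<bullet> (t *\<^sub>R p) \<le> 1" unfolding H_def by simp
    moreover have "c1 \<bullet> (t *\<^sub>R p) = t" using \<open>c1 \<bullet> p = 1\<close> by simp
    ultimately show False using \<open>t > 1\<close> by simp
  qed
  define a where "a h = inv_into A H h" for h
  have a_H: "a (H d) = d" if "d \<in> A" for d using inj_H that by (simp add: a_def)
  have "0 \<notin> A" using assms(2) unfolding irredundant_def by fastforce
  then have faceq: "a h \<noteq> 0 \<and> h = {x. a h \<bullet> x \<le> 1}" if "h \<in> H ` A" for h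
    using that a_H by (auto simp: H_def)
  have S_eq: "?S = \<Inter>(H ` A)" unfolding halfspace_body_def H_def by auto
  have S_hull: "?S \<subseteq> affine hull ?S" by (rule hull_subset)
  then have seq: "?S = affine hull ?S \<inter> \<Inter>(H ` A)" unfolding S_eq[symmetric] by blast
  have zero_in: "0 \<in> ?S" unfolding halfspace_body_def by simp
  have psub: "?S \<subset> affine hull ?S \<inter> \<Inter>F'" if F': "F' \<subset> H ` A" for F'
  proof -
    obtain d where d: "d \<in> A" "H d \<notin> F'" using F' by blast
    obtain p t where p: "p \<in> ?S" "d \<bullet> p = 1" "\<And>c'. c' \<in> A - {d} \<Longrightarrow> c' \<bullet> p < 1" "t > 1"
      and beyond: "\<And>c'. c' \<in> A - {d} \<Longrightarrow> c' \<bullet> (t *\<^sub>R p) \<le> 1"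
      using irredundant_boundary_point[OF assms(2) d(1)] by blast
    have "(1 - t) *\<^sub>R 0 + t *\<^sub>R p \<in> affine hull ?S"
      by (rule mem_affine[OF affine_affine_hull]) (use zero_in p(1) S_hull in auto)
    then have q_hull: "t *\<^sub>R p \<in> affine hull ?S" by simp
    have q_in: "t *\<^sub>R p \<in> \<Inter>F'" using F' d(2) beyond unfolding H_def by blast
    have "d \<bullet> (t *\<^sub>R p) = t" using p(2) by simp
    then have "\<not> d \<bullet> (t *\<^sub>R p) \<le> 1" using p(4) by simp
    then have q_out: "t *\<^sub>R p \<notin> ?S" using d(1) unfolding halfspace_body_def by blast
    have "?S \<subseteq> affine hull ?S \<inter> \<Inter>F'" using S_eq F' S_hull by blast
    then show ?thesis using q_hull q_in q_out by blast
  qed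
  have expl: "C facet_of ?S \<longleftrightarrow> (\<exists>h. h \<in> H ` A \<and> C = ?S \<inter> {x. a h \<bullet> x = 1})" for C
    by (rule facet_of_polyhedron_explicit[OF finite_imageI[OF assms(1)] seq faceq psub])
  show ?thesis
    unfolding expl
  proof (intro exI[of _ "H c"] conjI)
    show "H c \<in> H ` A" using assms(3) by blast
    show "?S \<inter> {x. c \<bullet> x = 1} = ?S \<inter> {x. a (H c) \<bullet> x = 1}" using a_H[OF assms(3)] by simp
  qed
qed

lemma irredundant_facets_inj:
  assumes "irredundant A"
  shows "inj_on (\<lambda>c. halfspace_body A \<inter> {x. c \<bullet> x = 1}) A"
proof (rule inj_onI, rule ccontr)
  fix c1 c2 assume c: "c1 \<in> A" "c2 \<in> A"
    "halfspace_body A \<inter> {x. c1 \<bullet> x = 1} = halfspace_body A \<inter> {x. c2 \<bullet> x = 1}" "c1 \<noteq> c2"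
  obtain p t where p: "p \<in> halfspace_body A" "c1 \<bullet> p = 1" "\<And>c'. c' \<in> A - {c1} \<Longrightarrow> c' \<bullet> p < 1"
    "t > 1" "\<And>c'. c' \<in> A - {c1} \<Longrightarrow> c' \<bullet> (t *\<^sub>R p) \<le> 1"
    using irredundant_boundary_point[OF assms c(1)] by blast
  then have "p \<in> halfspace_body A \<inter> {x. c2 \<bullet> x = 1}" using c(3) by blast
  then show False using p(3)[of c2] c(2,4) by simp
qed

lemma card_irredundant_le_facets:
  fixes A :: "'a::euclidean_space set"
  assumes "finite A" "irredundant A"
  shows "card A \<le> card {F. F facet_of halfspace_body A}"
proof -
  have "halfspace_body A = \<Inter>((\<lambda>c. {x. c \<bullet> x \<le> 1}) ` A)"
    unfolding halfspace_body_def by auto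
  moreover have "polyhedron (\<Inter>((\<lambda>c. {x. c \<bullet> x \<le> 1}) ` A))"
    using assms(1) by (intro polyhedron_Inter) (auto simp: polyhedron_halfspace_le)
  ultimately have "polyhedron (halfspace_body A)" by simp
  then have "finite {F. F facet_of halfspace_body A}" by (rule finite_polyhedron_facets)
  moreover have "(\<lambda>c. halfspace_body A \<inter> {x. c \<bullet> x = 1}) ` A \<subseteq> {F. F facet_of halfspace_body A}"
    using irredundant_facet[OF assms] by blast
  ultimately show ?thesis using card_inj_on_le[OF irredundant_facets_inj[OF assms(2)]] by blast
qed

lemma N_scale: "is_norm N \<Longrightarrow> N (c *\<^sub>R v) = \<bar>c\<bar> * N v"
  unfolding is_norm_def by blast

lemma N_eq_0_iff: "is_norm N \<Longrightarrow> N v = 0 \<longleftrightarrow> v = 0"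
  unfolding is_norm_def by blast

lemma N_uminus: "is_norm N \<Longrightarrow> N (- v) = N v"
  using N_scale[of N "-1" v] by simp

lemma N_pos: "is_norm N \<Longrightarrow> v \<noteq> 0 \<Longrightarrow> N v > 0"
proof -
  assume N: "is_norm N" and "v \<noteq> 0"
  have "N (v + - v) \<le> N v + N (- v)" using N unfolding is_norm_def by blast
  then have "N v \<ge> 0" using N_eq_0_iff[OF N, of 0] N_uminus[OF N, of v] by simp
  then show "N v > 0" using N_eq_0_iff[OF N, of v] \<open>v \<noteq> 0\<close> by simp
qed

lemma N_normalize: "is_norm N \<Longrightarrow> v \<noteq> 0 \<Longrightarrow> N ((1 / N v) *\<^sub>R v) = 1"
  using N_scale N_pos by fastforce

subsection \<open>Symmetric halfspace descriptions of the unit ball\<close>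

definition ball_rep :: "('a::euclidean_space \<Rightarrow> real) \<Rightarrow> 'a set \<Rightarrow> bool" where
  "ball_rep N A \<longleftrightarrow> finite A \<and> (\<forall>c\<in>A. - c \<in> A) \<and> {x. N x \<le> 1} = halfspace_body A"

lemma ball_repD:
  assumes "ball_rep N A"
  shows "finite A" "c \<in> A \<Longrightarrow> - c \<in> A" "N v \<le> 1 \<longleftrightarrow> (\<forall>c\<in>A. c \<bullet> v \<le> 1)"
  using assms unfolding ball_rep_def halfspace_body_def by (auto simp: set_eq_iff)

lemma ball_rep_abs_le:
  assumes N: "is_norm N" and A: "ball_rep N A" and c: "c \<in> A"
  shows "\<bar>c \<bullet> v\<bar> \<le> N v"
proof (cases "v = 0")
  case True then show ?thesis using N_eq_0_iff[OF N, of 0] by simp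
next
  case False
  have pos: "N v > 0" using N_pos[OF N False] .
  have "\<bar>d \<bullet> v\<bar> \<le> N v" if "d \<in> A" "- d \<in> A" for d
  proof -
    have "N ((1 / N v) *\<^sub>R v) \<le> 1" using N_normalize[OF N False] by simp
    then have "d \<bullet> ((1 / N v) *\<^sub>R v) \<le> 1" "(- d) \<bullet> ((1 / N v) *\<^sub>R v) \<le> 1"
      using ball_repD(3)[OF A] that by blast+
    then show ?thesis using pos by (simp add: abs_le_iff divide_le_eq le_divide_eq)
  qed
  then show ?thesis using c ball_repD(2)[OF A c] by blast
qed

lemma ball_rep_exceed:
  assumes "ball_rep N A" "N v > 1"
  obtains c where "c \<in> A" "c \<bullet> v > 1"
  using ball_repD(3)[OF assms(1), of v] assms(2) that by (auto simp: not_le)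

text \<open>A point of the unit sphere lies on one of the bounding hyperplanes: otherwise a slightly
  enlarged copy of it would still lie in the unit ball.\<close>

lemma ball_rep_touch:
  assumes N: "is_norm N" and A: "ball_rep N A" and m: "N m = 1"
  obtains c where "c \<in> A" "c \<bullet> m = 1"
proof (rule ccontr)
  assume no_touch: "\<not> thesis"
  note touch = that
  have lt: "c \<bullet> m < 1" if "c \<in> A" for c
    using ball_repD(3)[OF A, of m] m that touch[OF that] no_touch by force
  define M where "M = Max (insert (1/2) ((\<lambda>c. c \<bullet> m) ` A))"
  have fin: "finite A" using ball_repD(1)[OF A] .
  have M_lt: "M < 1" unfolding M_def using fin lt by (subst Max_less_iff) auto
  have M_ge: "M \<ge> 1/2" unfolding M_def using fin by (intro Max_ge) auto
  have "c \<bullet> ((1/M) *\<^sub>R m) \<le> 1" if "c \<in> A" for c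
  proof -
    have "c \<bullet> m \<le> M" unfolding M_def using fin that by (intro Max_ge) auto
    then show ?thesis using M_ge by (simp add: divide_le_eq)
  qed
  then have "N ((1/M) *\<^sub>R m) \<le> 1" using ball_repD(3)[OF A] by blast
  then show False using N_scale[OF N] m M_lt M_ge by (simp add: divide_le_eq)
qed

text \<open>A polyhedral unit ball has a symmetric description: write it as a finite intersection of
  halfspaces, normalise the offsets (which are positive because the ball is absorbing) to 1,
  and close the resulting set of functionals under negation, using N (- v) = N v.\<close>

lemma ball_rep_exists:
  fixes N :: "'a::euclidean_space \<Rightarrow> real"
  assumes N: "is_norm N" and P: "polyhedron {x. N x \<le> 1}"
  shows "\<exists>A. ball_rep N A"
proof -
  obtain F where F: "finite F" "{x. N x \<le> 1} = \<Inter>F"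
    and "\<forall>h\<in>F. \<exists>a b. a \<noteq> 0 \<and> h = {x. a \<bullet> x \<le> b}"
    using P unfolding polyhedron_def by blast
  then obtain a b where ab: "\<And>h. h \<in> F \<Longrightarrow> a h \<noteq> 0 \<and> h = {x. a h \<bullet> x \<le> b h}" by metis
  have in_F: "N v \<le> 1 \<longleftrightarrow> (\<forall>h\<in>F. a h \<bullet> v \<le> b h)" for v
    using F(2) ab by (auto simp: set_eq_iff)
  have b_pos: "b h > 0" if h: "h \<in> F" for h
  proof -
    have "N ((1 / N (a h)) *\<^sub>R a h) \<le> 1" using N_normalize[OF N] ab[OF h] by simp
    then have "a h \<bullet> ((1 / N (a h)) *\<^sub>R a h) \<le> b h" using in_F h by blast
    moreover have "a h \<bullet> ((1 / N (a h)) *\<^sub>R a h) > 0" using ab[OF h] N_pos[OF N] by simp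
    ultimately show ?thesis by linarith
  qed
  define A0 where "A0 = (\<lambda>h. (1 / b h) *\<^sub>R a h) ` F"
  have in_A0: "N v \<le> 1 \<longleftrightarrow> (\<forall>c\<in>A0. c \<bullet> v \<le> 1)" for v
  proof -
    have "N v \<le> 1 \<longleftrightarrow> (\<forall>h\<in>F. ((1 / b h) *\<^sub>R a h) \<bullet> v \<le> 1)"
      unfolding in_F using b_pos by (simp add: divide_le_eq)
    then show ?thesis unfolding A0_def by simp
  qed
  have "N v \<le> 1 \<longleftrightarrow> (\<forall>c\<in>A0 \<union> uminus ` A0. c \<bullet> v \<le> 1)" for v
  proof -
    have "N v \<le> 1 \<longleftrightarrow> N v \<le> 1 \<and> N (- v) \<le> 1" using N_uminus[OF N] by simp
    also have "\<dots> \<longleftrightarrow> (\<forall>c\<in>A0. c \<bullet> v \<le> 1 \<and> c \<bullet> (- v) \<le> 1)" unfolding in_A0 by blast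
    also have "\<dots> \<longleftrightarrow> (\<forall>c\<in>A0 \<union> uminus ` A0. c \<bullet> v \<le> 1)"
    proof
      assume "\<forall>c\<in>A0. c \<bullet> v \<le> 1 \<and> c \<bullet> (- v) \<le> 1"
      then show "\<forall>c\<in>A0 \<union> uminus ` A0. c \<bullet> v \<le> 1" by auto
    next
      assume h: "\<forall>c\<in>A0 \<union> uminus ` A0. c \<bullet> v \<le> 1"
      show "\<forall>c\<in>A0. c \<bullet> v \<le> 1 \<and> c \<bullet> (- v) \<le> 1"
      proof
        fix c assume "c \<in> A0"
        then have "c \<in> A0 \<union> uminus ` A0" "- c \<in> A0 \<union> uminus ` A0" by auto
        then have "c \<bullet> v \<le> 1" "(- c) \<bullet> v \<le> 1" using h by blast+
        then show "c \<bullet> v \<le> 1 \<and> c \<bullet> (- v) \<le> 1" by simp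
      qed
    qed
    finally show ?thesis .
  qed
  then have "ball_rep N (A0 \<union> uminus ` A0)"
    unfolding ball_rep_def halfspace_body_def using F(1) by (auto simp: A0_def)
  then show ?thesis by blast
qed

text \<open>A description of minimal cardinality is irredundant: an implied inequality c could be
  removed together with its mirror image -c.\<close>

lemma ball_rep_minimal_irredundant:
  assumes A: "ball_rep N A" and min: "\<And>A'. ball_rep N A' \<Longrightarrow> card A \<le> card A'"
  shows "irredundant A"
  unfolding irredundant_def
proof (rule ballI, rule ccontr)
  fix c assume c: "c \<in> A" and "\<not> (\<exists>z. (\<forall>c'\<in>A - {c}. c' \<bullet> z \<le> 1) \<and> c \<bullet> z > 1)"
  then have implied: "\<And>z. \<forall>c'\<in>A - {c}. c' \<bullet> z \<le> 1 \<Longrightarrow> c \<bullet> z \<le> 1" by (meson not_le)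
  define A' where "A' = A - {c, - c}"
  have sym': "- d \<in> A'" if "d \<in> A'" for d
    using that ball_repD(2)[OF A] unfolding A'_def by auto
  have c_implied: "c \<bullet> z \<le> 1" if z: "z \<in> halfspace_body A'" for z
  proof (rule ccontr)
    assume out: "\<not> c \<bullet> z \<le> 1"
    then have "\<forall>c'\<in>A - {c}. c' \<bullet> z \<le> 1"
      using z unfolding A'_def halfspace_body_def by auto
    then show False using implied out by blast
  qed
  have "halfspace_body A' = halfspace_body A"
  proof
    show "halfspace_body A \<subseteq> halfspace_body A'" unfolding A'_def halfspace_body_def by auto
  next
    show "halfspace_body A' \<subseteq> halfspace_body A"
    proof
      fix z assume z: "z \<in> halfspace_body A'"
      have "d \<bullet> (- z) \<le> 1" if "d \<in> A'" for d
      proof -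
        have "(- d) \<bullet> z \<le> 1" using z sym'[OF that] unfolding halfspace_body_def by blast
        then show ?thesis by simp
      qed
      then have "- z \<in> halfspace_body A'" unfolding halfspace_body_def by blast
      then have "c \<bullet> (- z) \<le> 1" by (rule c_implied)
      then have minus_c: "(- c) \<bullet> z \<le> 1" by simp
      have "e \<bullet> z \<le> 1" if e: "e \<in> A" for e
      proof -
        consider "e = c" | "e = - c" | "e \<in> A'" using e unfolding A'_def by blast
        then show ?thesis
          using c_implied[OF z] minus_c z unfolding halfspace_body_def by cases blast+
      qed
      then show "z \<in> halfspace_body A" unfolding halfspace_body_def by blast
    qed
  qed
  moreover have "finite A'" unfolding A'_def using ball_repD(1)[OF A] by simp
  ultimately have "ball_rep N A'"
    using A sym' unfolding ball_rep_def by simp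
  moreover have "card A' < card A"
    unfolding A'_def using c ball_repD(1)[OF A] by (intro psubset_card_mono) auto
  ultimately show False using min by fastforce
qed

lemma symmetric_card_le_2:
  fixes A :: "'a::real_vector set"
  assumes fin: "finite A" and sym: "\<And>c. c \<in> A \<Longrightarrow> - c \<in> A" and small: "card A \<le> 2"
  obtains c where "A \<subseteq> {c, - c}"
proof (cases "A \<subseteq> {0}")
  case True then show ?thesis using that by auto
next
  case False
  then obtain c where c: "c \<in> A" "c \<noteq> 0" by blast
  have "c \<noteq> - c"
  proof
    assume "c = - c"
    then have "2 *\<^sub>R c = 0" by (metis add.right_inverse scaleR_2)
    then show False using c(2) by simp
  qed
  then have two: "card {c, - c} = 2" by simp
  have sub: "{c, - c} \<subseteq> A" using c sym by blast
  then have "card {c, - c} = card A" using card_mono[OF fin sub] small two by linarith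
  then have "{c, - c} = A" by (rule card_subset_eq[OF fin sub])
  then show ?thesis using that by blast
qed

text \<open>In dimension at least 2 a symmetric description needs at least three functionals:
  otherwise some nonzero vector is orthogonal to all of them and its whole line would lie in
  the unit ball.\<close>

lemma ball_rep_card_ge_3:
  fixes N :: "'a::euclidean_space \<Rightarrow> real"
  assumes N: "is_norm N" and A: "ball_rep N A" and dim: "DIM('a) \<ge> 2"
  shows "card A \<ge> 3"
proof (rule ccontr)
  assume "\<not> card A \<ge> 3"
  then obtain c where c: "A \<subseteq> {c, - c}"
    using symmetric_card_le_2 ball_repD(1,2)[OF A] by (metis not_le numeral_le_iff less_Suc_eq_le eval_nat_numeral(3))
  obtain v where v: "v \<noteq> 0" "c \<bullet> v = 0"
    using orthogonal_to_vector_exists[OF dim] unfolding orthogonal_def by metis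
  have "\<forall>d\<in>A. d \<bullet> ((2 / N v) *\<^sub>R v) \<le> 1" using c v(2) by auto
  then have "N ((2 / N v) *\<^sub>R v) \<le> 1" using ball_repD(3)[OF A] by blast
  moreover have "N ((2 / N v) *\<^sub>R v) = 2" using N_scale[OF N] N_pos[OF N v(1)] by simp
  ultimately show False by simp
qed

subsection \<open>M-sets have fewer points than the description has functionals\<close>

text \<open>For distinct points of an M-set the midpoint has norm 1, so every functional of the
  description takes a value of modulus at most 2 on their sum.\<close>

lemma M_set_pair_bound:
  assumes N: "is_norm N" and A: "ball_rep N A" and S: "is_M_set N S"
    and x: "x \<in> S" and y: "y \<in> S" "y \<noteq> x" and c: "c \<in> A"
  shows "\<bar>c \<bullet> x + c \<bullet> y\<bar> \<le> 2"
proof -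
  have "(1/2) *\<^sub>R (x + y) \<in> midpoint_set S"
    unfolding midpoint_set_def using x y by blast
  then have "N ((1/2) *\<^sub>R (x + y)) = 1" using S unfolding is_M_set_def by blast
  then have "\<bar>c \<bullet> ((1/2) *\<^sub>R (x + y))\<bar> \<le> 1" using ball_rep_abs_le[OF N A c] by metis
  then show ?thesis by (simp add: inner_add_right)
qed

text \<open>Every point of an M-set is cut off by some functional, and by the pair bound no
  functional cuts off two points; this gives an injection of S into A.\<close>

lemma M_set_witness_map:
  assumes N: "is_norm N" and A: "ball_rep N A" and S: "is_M_set N S"
  obtains j where "inj_on j S" "j ` S \<subseteq> A" "\<And>x. x \<in> S \<Longrightarrow> j x \<bullet> x > 1"
proof -
  have "\<forall>x\<in>S. \<exists>c. c \<in> A \<and> c \<bullet> x > 1"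
    using ball_rep_exceed[OF A] S unfolding is_M_set_def by metis
  then obtain j where j: "\<And>x. x \<in> S \<Longrightarrow> j x \<in> A \<and> j x \<bullet> x > 1" by metis
  have "inj_on j S"
  proof (rule inj_onI, rule ccontr)
    fix x y assume xy: "x \<in> S" "y \<in> S" "j x = j y" "x \<noteq> y"
    have "\<bar>j x \<bullet> x + j x \<bullet> y\<bar> \<le> 2"
      using M_set_pair_bound[OF N A S xy(1,2)] xy(4) j[OF xy(1)] by metis
    then show False using j[OF xy(1)] j[OF xy(2)] xy(3) by simp
  qed
  then show thesis using that j by blast
qed

text \<open>Take x \<in> S with
  witness a, the point x' with witness -a, and a third point y.  Some d \<in> A is tight at the
  midpoint of x and x'; d is the witness of some w.  Each choice of w (x, x', or another point)
  contradicts the pair bound.\<close>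

lemma M_set_witness_not_onto:
  assumes N: "is_norm N" and A: "ball_rep N A" and S: "is_M_set N S"
    and onto: "j ` S = A" and wit: "\<And>x. x \<in> S \<Longrightarrow> j x \<bullet> x > 1" and three: "card A \<ge> 3"
  shows False
proof -
  have bound: "\<bar>c \<bullet> u + c \<bullet> u'\<bar> \<le> 2" if "u \<in> S" "u' \<in> S" "u' \<noteq> u" "c \<in> A" for u u' c
    using M_set_pair_bound[OF N A S that] .
  have "A \<noteq> {}" using three by auto
  then obtain x where x: "x \<in> S" using onto by blast
  define a where "a = j x"
  have a: "a \<in> A" "a \<bullet> x > 1" using x onto wit unfolding a_def by auto
  obtain x' where x': "x' \<in> S" "j x' = - a" using ball_repD(2)[OF A a(1)] onto by force
  have ax': "a \<bullet> x' < -1" using wit[OF x'(1)] x'(2) by simp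
  then have xx': "x' \<noteq> x" using a(2) by auto
  have "card A - card {a, - a} \<le> card (A - {a, - a})" by (rule diff_card_le_card_Diff) simp
  moreover have "card {a, - a} \<le> 2" by (simp add: card_insert_if)
  ultimately have "card (A - {a, - a}) \<ge> 1" using three by linarith
  then obtain b where "b \<in> A" "b \<noteq> a" "b \<noteq> - a"
    by (metis Diff_iff card.empty empty_iff insertCI not_one_le_zero subsetI subset_empty)
  then obtain y where y: "y \<in> S" "y \<noteq> x" "y \<noteq> x'" using onto x'(2) unfolding a_def by force
  have "N ((1/2) *\<^sub>R (x' + x)) = 1"
    using S x x'(1) xx' unfolding is_M_set_def midpoint_set_def by blast
  then obtain d where d: "d \<in> A" "d \<bullet> ((1/2) *\<^sub>R (x' + x)) = 1" using ball_rep_touch[OF N A] by blast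
  then have d_sum: "d \<bullet> x' + d \<bullet> x = 2" by (simp add: inner_add_right)
  obtain w where w: "w \<in> S" "d = j w" using onto d(1) by auto
  have dw: "d \<bullet> w > 1" using wit[OF w(1)] w(2) by simp
  consider "w = x" | "w = x'" | "w \<noteq> x" "w \<noteq> x'" by blast
  then show False
  proof cases
    case 1
    then have "d = a" using w a_def by simp
    then show ?thesis using bound[OF x y(1,2) a(1)] bound[OF x'(1) y(1,3) a(1)] d_sum a(2) ax'
      by (simp add: abs_le_iff)
  next
    case 2
    then have "d = - a" using w x'(2) by simp
    then show ?thesis using bound[OF x y(1,2) a(1)] bound[OF x'(1) y(1,3) a(1)] d_sum a(2) ax'
      by (simp add: abs_le_iff)
  next
    case 3
    then show ?thesis using bound[OF w(1) x 3(1)[symmetric] d(1)] bound[OF w(1) x'(1) 3(2)[symmetric] d(1)]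
        d_sum dw by (simp add: abs_le_iff)
  qed
qed

lemma M_set_card_less:
  assumes N: "is_norm N" and A: "ball_rep N A" and three: "card A \<ge> 3" and S: "is_M_set N S"
  shows "finite S \<and> card S < card A"
proof -
  obtain j where j: "inj_on j S" "j ` S \<subseteq> A" "\<And>x. x \<in> S \<Longrightarrow> j x \<bullet> x > 1"
    using M_set_witness_map[OF N A S] by blast
  have fin: "finite A" using ball_repD(1)[OF A] .
  have "finite S" using j(1,2) fin by (meson finite_imageD finite_subset)
  moreover have "card S \<le> card A" using card_inj_on_le[OF j(1,2) fin] .
  moreover have "card S \<noteq> card A"
  proof
    assume "card S = card A"
    then have "j ` S = A" using card_subset_eq[OF fin j(2)] card_image[OF j(1)] by simp
    then show False using M_set_witness_not_onto[OF N A S _ j(3) three] by blast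
  qed
  ultimately show ?thesis by simp
qed

theorem mainTheorem16:
  fixes N :: "'a::euclidean_space \<Rightarrow> real"
  assumes "is_norm N"
    and "DIM('a) \<ge> 2"
    and "polytope {x. N x \<le> 1}"
    and "f = card {F. F facet_of {x. N x \<le> 1}}"
  shows "\<forall>S. is_M_set N S \<longrightarrow> finite S \<and> card S \<le> f - 1"
proof (intro allI impI)
  fix S assume S: "is_M_set N S"
  obtain A0 where "ball_rep N A0"
    using ball_rep_exists[OF assms(1) polytope_imp_polyhedron[OF assms(3)]] by blast
  then obtain A where A: "ball_rep N A" and min: "\<And>A'. ball_rep N A' \<Longrightarrow> card A \<le> card A'"
    using ex_has_least_nat[of "ball_rep N" A0 card] by blast
  have "irredundant A" using ball_rep_minimal_irredundant[OF A min] .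
  then have "card A \<le> f"
    using card_irredundant_le_facets[OF ball_repD(1)[OF A]] A assms(4)
    unfolding ball_rep_def by simp
  moreover have "card A \<ge> 3" using ball_rep_card_ge_3[OF assms(1) A assms(2)] .
  then have "finite S \<and> card S < card A" using M_set_card_less[OF assms(1) A _ S] by simp
  ultimately show "finite S \<and> card S \<le> f - 1" by linarith
qed

end
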